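(* Let $(X_n)_{n\ge0}$ be a Markov chain on $\mathbb Z_+$ with transition matrix $P$. Assume that for every $i\in\mathbb Z_+$ there is a positive non-increasing function $g_i$ on $\mathbb Z_+$ such that $g_i(X_n)$ is a supermartingale (i.e. $\sum_k P(j,k)g_i(k)\le g_i(j)$ for all $j\in\mathbb Z_+$), and that $$p_1:=\sup_{i\ge1}\frac{g_i(i)}{g_i(i-1)}<1,\qquad p_2:=\inf_{i\ge0}\mathbb P_i\{X_1\ge i+1\}>0.$$ Then there exists $\gamma>0$ such that $\sup_{i\in\mathbb Z_+}\mathbb E_ie^{\gamma\ell(i)}<\infty$.
   Context: $\mathbb P_i,\mathbb E_i$ denote probability and expectation given $X_0=i$; the local time at $i$ is $\ell(i):=\sum_{n=0}^\infty\mathbf 1\{X_n=i\}$. *)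

theory Defs
  imports "HOL-Probability.Probability"
begin

definition stochastic_matrix :: "(nat \<Rightarrow> nat \<Rightarrow> real) \<Rightarrow> bool" where
  "stochastic_matrix P \<longleftrightarrow> (\<forall>j k. 0 \<le> P j k) \<and> (\<forall>j. (\<lambda>k. P j k) sums 1)"

fun path_weight :: "(nat \<Rightarrow> nat \<Rightarrow> real) \<Rightarrow> nat \<Rightarrow> nat list \<Rightarrow> real" where
  "path_weight P x [] = 1"
| "path_weight P x (y # ys) = P x y * path_weight P y ys"

text \<open>Under the probability measure M, the process X (X n : state at time n) is a Markov
  chain with transition matrix P started at X 0 = i: its finite-dimensional distributions
  are the ones of the chain.\<close>
definition markov_chain_from ::
  "(nat \<Rightarrow> nat \<Rightarrow> real) \<Rightarrow> 'a measure \<Rightarrow> (nat \<Rightarrow> 'a \<Rightarrow> nat) \<Rightarrow> nat \<Rightarrow> bool" where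
  "markov_chain_from P M X i \<longleftrightarrow>
     prob_space M \<and> (\<forall>n. X n \<in> M \<rightarrow>\<^sub>M count_space UNIV) \<and>
     (\<forall>xs. measure M {\<omega> \<in> space M. \<forall>j < length xs. X j \<omega> = xs ! j} =
        (case xs of [] \<Rightarrow> 1 | x # ys \<Rightarrow> (if x = i then path_weight P x ys else 0)))"

definition local_time :: "(nat \<Rightarrow> 'a \<Rightarrow> nat) \<Rightarrow> nat \<Rightarrow> 'a \<Rightarrow> enat" where
  "local_time X i \<omega> = (if finite {n. X n \<omega> = i} then enat (card {n. X n \<omega> = i}) else \<infinity>)"

definition exp_enat :: "real \<Rightarrow> enat \<Rightarrow> ennreal" where
  "exp_enat \<gamma> l = (case l of enat m \<Rightarrow> ennreal (exp (\<gamma> * real m)) | \<infinity> \<Rightarrow> \<infinity>)"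

end

theory Submission
  imports Defs
begin

text \<open>
  Fix a state i. Started above i, the chain hits i with probability at most g_i(i+1)/g_i(i)
  \<le> p_1, because g_i stopped at the hitting time of i is a positive supermartingale which is
  non-increasing in the state. Hence, once at i, the chain jumps above i with probability
  \<ge> p_2 and then fails to come back with probability \<ge> 1 - p_1: every return to i happens
  with probability at most q = 1 - p_2 (1 - p_1) < 1, uniformly in i. By the Markov property
  at successive visits, \<P>_i{\<ell>(i) > m} \<le> q^m, and any \<gamma> > 0 with e^\<gamma> q < 1 works.
\<close>

subsection \<open>Path probabilities\<close>

lemma stochastic_matrix_nonneg: "stochastic_matrix P \<Longrightarrow> 0 \<le> P j k"
  unfolding stochastic_matrix_def by auto

lemma stochastic_matrix_sums: "stochastic_matrix P \<Longrightarrow> (\<lambda>k. P j k) sums 1"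
  unfolding stochastic_matrix_def by auto

lemma nn_integral_stochastic_row:
  assumes "stochastic_matrix P"
  shows "(\<integral>\<^sup>+ y. ennreal (P x y) \<partial>count_space UNIV) = 1"
  using stochastic_matrix_sums[OF assms, of x] stochastic_matrix_nonneg[OF assms]
  by (simp add: nn_integral_count_space_nat suminf_ennreal2 sums_iff)

lemma summable_stochastic_row_mult:
  assumes P: "stochastic_matrix P" and "\<And>k. 0 \<le> G k" "\<And>k. G k \<le> B"
  shows "summable (\<lambda>k. P j k * G k)"
proof (rule summable_comparison_test)
  show "summable (\<lambda>k. P j k * B)"
    using stochastic_matrix_sums[OF P] by (intro summable_mult2) (auto simp: sums_iff)
  show "\<exists>N. \<forall>n\<ge>N. norm (P j n * G n) \<le> P j n * B"
    using stochastic_matrix_nonneg[OF P] assms(2,3) by (auto intro!: mult_left_mono)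
qed

lemma nn_integral_count_space_nat_ennreal:
  assumes "\<And>k. 0 \<le> f k" "summable f"
  shows "(\<integral>\<^sup>+ y. ennreal (f y) \<partial>count_space UNIV) = ennreal (\<Sum>y. f y)"
  using assms by (simp add: nn_integral_count_space_nat suminf_ennreal2)

lemma nn_integral_lists_Suc_length:
  "(\<integral>\<^sup>+ zs. f zs * indicator {zs. length zs = Suc N} zs \<partial>count_space UNIV) =
   (\<integral>\<^sup>+ y. \<integral>\<^sup>+ ys. f (y # ys) * indicator {ys. length ys = N} ys \<partial>count_space UNIV \<partial>count_space UNIV)"
proof -
  have "(\<integral>\<^sup>+ y. \<integral>\<^sup>+ ys. f (y # ys) * indicator {ys. length ys = N} ys \<partial>count_space UNIV \<partial>count_space UNIV)
      = (\<integral>\<^sup>+ p. f (fst p # snd p) * indicator {ys. length ys = N} (snd p) \<partial>count_space UNIV)"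
    using nn_integral_fst_count_space[of "\<lambda>p. f (fst p # snd p) * indicator {ys. length ys = N} (snd p)"]
    by simp
  also have "\<dots> = (\<integral>\<^sup>+ p. f (fst p # snd p) \<partial>count_space (UNIV \<times> {ys. length ys = N}))"
    by (subst nn_integral_count_space_indicator) (auto intro!: nn_integral_cong split: split_indicator)
  also have "\<dots> = (\<integral>\<^sup>+ zs. f zs \<partial>count_space {zs. length zs = Suc N})"
    by (rule nn_integral_bij_count_space)
       (auto simp: bij_betw_def inj_on_def length_Suc_conv image_iff)
  also have "\<dots> = (\<integral>\<^sup>+ zs. f zs * indicator {zs. length zs = Suc N} zs \<partial>count_space UNIV)"
    by (simp add: nn_integral_count_space_indicator)
  finally show ?thesis ..
qed

text \<open>The list ys records the N states visited after x, without x itself.\<close>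
definition path_prob :: "(nat \<Rightarrow> nat \<Rightarrow> real) \<Rightarrow> nat \<Rightarrow> nat \<Rightarrow> nat list set \<Rightarrow> ennreal" where
  "path_prob P N x T =
     (\<integral>\<^sup>+ ys. ennreal (path_weight P x ys) * indicator {ys. length ys = N \<and> ys \<in> T} ys \<partial>count_space UNIV)"

lemma path_prob_0: "path_prob P 0 x T = indicator T []"
proof -
  have "path_prob P 0 x T = (\<integral>\<^sup>+ ys. indicator T [] * indicator {[]} (ys::nat list) \<partial>count_space UNIV)"
    unfolding path_prob_def by (intro nn_integral_cong) (auto split: split_indicator)
  then show ?thesis by (simp add: nn_integral_cmult_indicator)
qed

lemma path_prob_Suc:
  assumes "\<And>y. 0 \<le> P x y"
  shows "path_prob P (Suc N) x T =
    (\<integral>\<^sup>+ y. ennreal (P x y) * path_prob P N y {ys. y # ys \<in> T} \<partial>count_space UNIV)"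
proof -
  have "path_prob P (Suc N) x T = (\<integral>\<^sup>+ zs. (ennreal (path_weight P x zs) * indicator T zs) *
      indicator {zs. length zs = Suc N} zs \<partial>count_space UNIV)"
    unfolding path_prob_def by (intro nn_integral_cong) (auto split: split_indicator)
  also have "\<dots> = (\<integral>\<^sup>+ y. \<integral>\<^sup>+ ys. (ennreal (path_weight P x (y # ys)) * indicator T (y # ys)) *
      indicator {ys. length ys = N} ys \<partial>count_space UNIV \<partial>count_space UNIV)"
    by (rule nn_integral_lists_Suc_length)
  also have "\<dots> = (\<integral>\<^sup>+ y. ennreal (P x y) * path_prob P N y {ys. y # ys \<in> T} \<partial>count_space UNIV)"
    unfolding path_prob_def using assms
    by (intro nn_integral_cong)
       (auto simp: ennreal_mult' nn_integral_cmult[symmetric] mult.assoc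
             intro!: nn_integral_cong split: split_indicator)
  finally show ?thesis .
qed

lemma path_prob_mono: "T \<subseteq> T' \<Longrightarrow> path_prob P N x T \<le> path_prob P N x T'"
  unfolding path_prob_def by (intro nn_integral_mono) (auto split: split_indicator)

lemma path_prob_UNIV:
  assumes "stochastic_matrix P"
  shows "path_prob P N x UNIV = 1"
proof (induction N arbitrary: x)
  case 0
  then show ?case by (simp add: path_prob_0)
next
  case (Suc N)
  then show ?case
    using nn_integral_stochastic_row[OF assms, of x] stochastic_matrix_nonneg[OF assms]
    by (simp add: path_prob_Suc)
qed

lemma path_prob_le_1:
  assumes "stochastic_matrix P"
  shows "path_prob P N x T \<le> 1"
  using path_prob_mono[of T UNIV P N x] path_prob_UNIV[OF assms] by simp

subsection \<open>Hitting and return probabilities\<close>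

text \<open>Optional stopping: G stopped at the hitting time of i is a supermartingale equal to G i
  after the hit.\<close>
lemma path_prob_hit_le:
  assumes P: "stochastic_matrix P" and G_pos: "\<And>k. 0 < G k" and G_bdd: "\<And>k. G k \<le> B"
    and G_super: "\<And>j. (\<Sum>k. P j k * G k) \<le> G j"
  shows "path_prob P N x {ys. i \<in> set (x # ys)} \<le> ennreal (G x / G i)"
proof (induction N arbitrary: x)
  case 0
  show ?case using G_pos[of x] G_pos[of i] by (auto simp: path_prob_0 split: split_indicator)
next
  case (Suc N)
  show ?case
  proof (cases "x = i")
    case True
    then show ?thesis using path_prob_le_1[OF P] G_pos[of i] by simp
  next
    case False
    have nonneg: "\<And>y. 0 \<le> P x y" using stochastic_matrix_nonneg[OF P] .
    have summable: "summable (\<lambda>k. P x k * G k)"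
      using G_pos G_bdd by (intro summable_stochastic_row_mult[OF P]) (auto simp: less_imp_le)
    have "path_prob P (Suc N) x {ys. i \<in> set (x # ys)} =
        (\<integral>\<^sup>+ y. ennreal (P x y) * path_prob P N y {ys. i \<in> set (y # ys)} \<partial>count_space UNIV)"
      using False by (simp add: path_prob_Suc[of P x, OF nonneg])
    also have "\<dots> \<le> (\<integral>\<^sup>+ y. ennreal (P x y * (G y / G i)) \<partial>count_space UNIV)"
      unfolding ennreal_mult'[OF nonneg] by (intro nn_integral_mono mult_left_mono Suc.IH) auto
    also have "\<dots> = ennreal ((\<Sum>y. P x y * G y) / G i)"
    proof -
      have "(\<lambda>y. P x y * (G y / G i)) = (\<lambda>y. P x y * G y / G i)" by auto
      then show ?thesis
        using nonneg G_pos summable_divide[OF summable, of "G i"] suminf_divide[OF summable, of "G i"]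
        by (simp add: nn_integral_count_space_nat_ennreal less_imp_le)
    qed
    also have "\<dots> \<le> ennreal (G x / G i)"
      using G_super[of x] G_pos[of i] by (intro ennreal_leI divide_right_mono) auto
    finally show ?thesis .
  qed
qed

text \<open>From i the chain jumps above i with probability at least p2, and from there it comes back
  with probability at most G (Suc i) / G i \<le> p1.\<close>
lemma return_prob_le:
  assumes P: "stochastic_matrix P" and G_pos: "\<And>k. 0 < G k"
    and G_noninc: "\<And>j k. j \<le> k \<Longrightarrow> G k \<le> G j"
    and G_super: "\<And>j. (\<Sum>k. P j k * G k) \<le> G j"
    and ratio: "G (Suc i) / G i \<le> p1" and "p1 < 1"
    and jump: "p2 \<le> (\<Sum>y. P i y * indicator {Suc i..} y)"
  shows "(\<integral>\<^sup>+ y. ennreal (P i y) * path_prob P N y {ys. i \<in> set (y # ys)} \<partial>count_space UNIV)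
    \<le> ennreal (1 - p2 * (1 - p1))"
proof -
  have nonneg: "\<And>y. 0 \<le> P i y" using stochastic_matrix_nonneg[OF P] .
  have "0 \<le> p1"
    using ratio divide_pos_pos[OF G_pos[of "Suc i"] G_pos[of i]] by linarith
  define h where "h y = (if y \<le> i then 1 else p1)" for y
  have h_bounds: "0 \<le> h y" "h y \<le> 1" for y
    using \<open>0 \<le> p1\<close> \<open>p1 < 1\<close> by (auto simp: h_def)
  have hit_le_h: "path_prob P N y {ys. i \<in> set (y # ys)} \<le> ennreal (h y)" for y
  proof (cases "y \<le> i")
    case True
    then show ?thesis using path_prob_le_1[OF P] by (simp add: h_def)
  next
    case False
    have "G y / G i \<le> G (Suc i) / G i"
      using False G_noninc[of "Suc i" y] G_pos[of i] by (simp add: divide_right_mono)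
    then have "ennreal (G y / G i) \<le> ennreal p1" using ratio by (intro ennreal_leI) linarith
    then show ?thesis
      using path_prob_hit_le[OF P G_pos _ G_super, of "G 0" N y i] G_noninc False by (simp add: h_def)
  qed
  have summable_jump: "summable (\<lambda>y. P i y * indicator {Suc i..} y)"
    by (rule summable_stochastic_row_mult[OF P, of _ 1]) (auto split: split_indicator)
  have "(\<integral>\<^sup>+ y. ennreal (P i y) * path_prob P N y {ys. i \<in> set (y # ys)} \<partial>count_space UNIV)
      \<le> (\<integral>\<^sup>+ y. ennreal (P i y * h y) \<partial>count_space UNIV)"
    using hit_le_h nonneg by (intro nn_integral_mono) (simp add: ennreal_mult' mult_left_mono)
  also have "\<dots> = ennreal (\<Sum>y. P i y * h y)"
    using nonneg h_bounds summable_stochastic_row_mult[OF P, of h 1]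
    by (intro nn_integral_count_space_nat_ennreal) auto
  also have "(\<Sum>y. P i y * h y) = (\<Sum>y. P i y) - (1 - p1) * (\<Sum>y. P i y * indicator {Suc i..} y)"
  proof -
    have "(\<lambda>y. P i y * h y) = (\<lambda>y. P i y - (1 - p1) * (P i y * indicator {Suc i..} y))"
      by (auto simp: h_def fun_eq_iff algebra_simps split: split_indicator)
    moreover have "summable (\<lambda>y. P i y)"
      using stochastic_matrix_sums[OF P, of i] by (simp add: sums_iff)
    ultimately show ?thesis
      using suminf_diff[OF _ summable_mult[OF summable_jump], of "P i" "1 - p1"]
      by (simp add: suminf_mult[OF summable_jump])
  qed
  also have "\<dots> \<le> 1 - p2 * (1 - p1)"
    using stochastic_matrix_sums[OF P, of i] jump \<open>p1 < 1\<close>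
    by (simp add: sums_iff mult.commute mult_left_mono)
  finally show ?thesis by (simp add: ennreal_leI)
qed

text \<open>Markov property at each visit to i; the hitting probability is carried along so that
  the induction goes through for starting points other than i.\<close>
lemma path_prob_visits_le:
  assumes P: "stochastic_matrix P"
    and return: "\<And>N. (\<integral>\<^sup>+ y. ennreal (P i y) * path_prob P N y {ys. i \<in> set (y # ys)}
      \<partial>count_space UNIV) \<le> ennreal q"
  shows "path_prob P N x {ys. Suc m \<le> count_list (x # ys) i}
    \<le> path_prob P N x {ys. i \<in> set (x # ys)} * ennreal q ^ m"
proof (induction N arbitrary: x m)
  case 0
  show ?case by (cases m) (auto simp: path_prob_0 split: split_indicator)
next
  case (Suc N)
  have nonneg: "\<And>y. 0 \<le> P x y" using stochastic_matrix_nonneg[OF P] .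
  have step: "(\<integral>\<^sup>+ y. ennreal (P x y) * path_prob P N y {ys. Suc k \<le> count_list (y # ys) i}
      \<partial>count_space UNIV)
    \<le> (\<integral>\<^sup>+ y. ennreal (P x y) * path_prob P N y {ys. i \<in> set (y # ys)} \<partial>count_space UNIV)
      * ennreal q ^ k" for k
  proof -
    have "(\<integral>\<^sup>+ y. ennreal (P x y) * path_prob P N y {ys. Suc k \<le> count_list (y # ys) i}
        \<partial>count_space UNIV)
      \<le> (\<integral>\<^sup>+ y. ennreal (P x y) * path_prob P N y {ys. i \<in> set (y # ys)} * ennreal q ^ k
        \<partial>count_space UNIV)"
      using Suc.IH by (intro nn_integral_mono) (simp add: mult.assoc mult_left_mono)
    then show ?thesis by (simp add: nn_integral_multc)
  qed
  show ?case
  proof (cases "x = i")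
    case False
    then show ?thesis using step[of m] by (simp add: path_prob_Suc[of P x, OF nonneg])
  next
    case True
    have hit: "path_prob P (Suc N) x {ys. i \<in> set (x # ys)} = 1"
      using True path_prob_UNIV[OF P] by simp
    show ?thesis
    proof (cases m)
      case 0
      then show ?thesis using hit path_prob_le_1[OF P] by simp
    next
      case (Suc k)
      have "path_prob P (Suc N) x {ys. Suc m \<le> count_list (x # ys) i} =
          (\<integral>\<^sup>+ y. ennreal (P x y) * path_prob P N y {ys. Suc k \<le> count_list (y # ys) i}
            \<partial>count_space UNIV)"
        using True Suc by (subst path_prob_Suc[of P x, OF nonneg]) simp
      also have "\<dots> \<le> (\<integral>\<^sup>+ y. ennreal (P x y) * path_prob P N y {ys. i \<in> set (y # ys)}
          \<partial>count_space UNIV) * ennreal q ^ k"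
        by (rule step)
      also have "\<dots> \<le> ennreal q * ennreal q ^ k"
        using return[of N] True by (intro mult_right_mono) auto
      finally show ?thesis using hit Suc by simp
    qed
  qed
qed

subsection \<open>From paths to the chain\<close>

lemma prefix_event_eq_UN_cylinders:
  "{\<omega> \<in> space M. map (\<lambda>j. X j \<omega>) [0..<Suc N] \<in> S} =
    (\<Union>xs\<in>{xs. length xs = Suc N \<and> xs \<in> S}. {\<omega> \<in> space M. \<forall>j < length xs. X j \<omega> = xs ! j})"
proof (intro equalityI subsetI)
  fix \<omega> assume "\<omega> \<in> {\<omega> \<in> space M. map (\<lambda>j. X j \<omega>) [0..<Suc N] \<in> S}"
  then show "\<omega> \<in> (\<Union>xs\<in>{xs. length xs = Suc N \<and> xs \<in> S}. {\<omega> \<in> space M. \<forall>j < length xs. X j \<omega> = xs ! j})"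
    by (intro UN_I[of "map (\<lambda>j. X j \<omega>) [0..<Suc N]"]) (auto simp del: upt_Suc)
next
  fix \<omega> assume "\<omega> \<in> (\<Union>xs\<in>{xs. length xs = Suc N \<and> xs \<in> S}. {\<omega> \<in> space M. \<forall>j < length xs. X j \<omega> = xs ! j})"
  then obtain xs where xs: "length xs = Suc N" "xs \<in> S" "\<omega> \<in> space M" "\<forall>j < length xs. X j \<omega> = xs ! j"
    by auto
  then have "map (\<lambda>j. X j \<omega>) [0..<Suc N] = xs"
    by (auto simp del: upt_Suc intro!: nth_equalityI)
  with xs show "\<omega> \<in> {\<omega> \<in> space M. map (\<lambda>j. X j \<omega>) [0..<Suc N] \<in> S}" by auto
qed

lemma markov_chain_from_measurable:
  "markov_chain_from P M X i \<Longrightarrow> X n \<in> M \<rightarrow>\<^sub>M count_space UNIV"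
  unfolding markov_chain_from_def by auto

lemma markov_chain_from_prob_space: "markov_chain_from P M X i \<Longrightarrow> prob_space M"
  unfolding markov_chain_from_def by auto

lemma sets_markov_chain_prefix_event:
  assumes "markov_chain_from P M X i"
  shows "{\<omega> \<in> space M. map (\<lambda>j. X j \<omega>) [0..<Suc N] \<in> S} \<in> sets M"
proof -
  note [measurable] = markov_chain_from_measurable[OF assms]
  show ?thesis
    unfolding prefix_event_eq_UN_cylinders by (intro sets.countable_UN') auto
qed

lemma emeasure_markov_chain_prefix_event:
  assumes chain: "markov_chain_from P M X i"
  shows "emeasure M {\<omega> \<in> space M. map (\<lambda>j. X j \<omega>) [0..<Suc N] \<in> S} = path_prob P N i {ys. i # ys \<in> S}"
proof -
  interpret prob_space M using markov_chain_from_prob_space[OF chain] .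
  note [measurable] = markov_chain_from_measurable[OF chain]
  define C where "C xs = {\<omega> \<in> space M. \<forall>j < length xs. X j \<omega> = xs ! j}" for xs :: "nat list"
  define I where "I = {xs. length xs = Suc N \<and> xs \<in> S}"
  have C_sets: "C xs \<in> sets M" for xs unfolding C_def by measurable
  have C_disj: "disjoint_family_on C I"
    unfolding disjoint_family_on_def I_def C_def by (auto intro!: nth_equalityI)
  have "emeasure M {\<omega> \<in> space M. map (\<lambda>j. X j \<omega>) [0..<Suc N] \<in> S} = emeasure M (\<Union>(C ` I))"
    unfolding prefix_event_eq_UN_cylinders C_def I_def ..
  also have "\<dots> = (\<integral>\<^sup>+ xs. emeasure M (C xs) \<partial>count_space I)"
    by (rule emeasure_UN_countable[OF C_sets _ C_disj]) auto
  also have "\<dots> = (\<integral>\<^sup>+ xs. ennreal (case xs of [] \<Rightarrow> 1 | y # ys \<Rightarrow> if y = i then path_weight P y ys else 0)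
      * indicator S xs * indicator {zs. length zs = Suc N} xs \<partial>count_space UNIV)"
    using chain
    by (subst nn_integral_count_space_indicator)
       (auto intro!: nn_integral_cong simp: markov_chain_from_def emeasure_eq_measure C_def I_def
             split: split_indicator)
  also have "\<dots> = (\<integral>\<^sup>+ y. path_prob P N i {ys. i # ys \<in> S} * indicator {i} y \<partial>count_space UNIV)"
    unfolding nn_integral_lists_Suc_length path_prob_def
    by (intro nn_integral_cong) (auto intro!: nn_integral_cong split: split_indicator)
  finally show ?thesis by (simp add: nn_integral_cmult_indicator)
qed

lemma measure_markov_chain_first_step_above:
  assumes P: "stochastic_matrix P" and chain: "markov_chain_from P M X i"
  shows "measure M {\<omega> \<in> space M. i + 1 \<le> X 1 \<omega>} = (\<Sum>y. P i y * indicator {Suc i..} y)"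
proof -
  have nonneg: "\<And>y. 0 \<le> P i y" using stochastic_matrix_nonneg[OF P] .
  have summable: "summable (\<lambda>y. P i y * indicator {Suc i..} y)"
    by (rule summable_stochastic_row_mult[OF P, of _ 1]) (auto split: split_indicator)
  have "emeasure M {\<omega> \<in> space M. i + 1 \<le> X 1 \<omega>} =
      emeasure M {\<omega> \<in> space M. map (\<lambda>j. X j \<omega>) [0..<Suc 1] \<in> {xs. Suc i \<le> xs ! 1}}"
    by simp
  also have "\<dots> = path_prob P 1 i {ys. i # ys \<in> {xs. Suc i \<le> xs ! 1}}"
    by (rule emeasure_markov_chain_prefix_event[OF chain])
  also have "\<dots> = (\<integral>\<^sup>+ y. ennreal (P i y * indicator {Suc i..} y) \<partial>count_space UNIV)"
    unfolding One_nat_def path_prob_Suc[of P i, OF nonneg]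
    by (auto simp: path_prob_0 intro!: nn_integral_cong split: split_indicator)
  also have "\<dots> = ennreal (\<Sum>y. P i y * indicator {Suc i..} y)"
    using nonneg summable by (intro nn_integral_count_space_nat_ennreal) (auto split: split_indicator)
  finally show ?thesis
    using nonneg summable
    by (simp add: measure_def suminf_nonneg split: split_indicator)
qed

lemma ratio_le_SUP_ratio:
  fixes g :: "nat \<Rightarrow> nat \<Rightarrow> real"
  assumes "\<And>i k. 0 < g i k" and "\<And>i j k. j \<le> k \<Longrightarrow> g i k \<le> g i j"
  shows "g (Suc i) (Suc i) / g (Suc i) i \<le> (SUP i\<in>{1..}. g i i / g i (i - 1))"
proof -
  have "bdd_above ((\<lambda>i. g i i / g i (i - 1)) ` {1..})"
    using assms by (intro bdd_aboveI2[of _ _ 1]) (simp add: less_imp_le)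
  then show ?thesis
    using cSUP_upper[of "Suc i" "{1..}" "\<lambda>i. g i i / g i (i - 1)"] by simp
qed

lemma return_prob_uniform_bound:
  fixes g :: "nat \<Rightarrow> nat \<Rightarrow> real"
  assumes P: "stochastic_matrix P"
    and chain: "\<And>i. markov_chain_from P (M i) X i"
    and g_pos: "\<And>i k. 0 < g i k"
    and g_noninc: "\<And>i j k. j \<le> k \<Longrightarrow> g i k \<le> g i j"
    and g_super: "\<And>i j. (\<Sum>k. P j k * g i k) \<le> g i j"
    and p1: "(SUP i\<in>{1..}. g i i / g i (i - 1)) < 1"
    and p2: "(INF i. measure (M i) {\<omega> \<in> space (M i). X 1 \<omega> \<ge> i + 1}) > 0"
  shows "\<exists>q. 0 \<le> q \<and> q < 1 \<and> (\<forall>i N. (\<integral>\<^sup>+ y. ennreal (P i y) * path_prob P N y {ys. i \<in> set (y # ys)}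
    \<partial>count_space UNIV) \<le> ennreal q)"
proof -
  define \<rho> where "\<rho> = (SUP i\<in>{1..}. g i i / g i (i - 1))"
  define \<beta> where "\<beta> = (INF i. measure (M i) {\<omega> \<in> space (M i). X 1 \<omega> \<ge> i + 1})"
  have ratio: "g (Suc i) (Suc i) / g (Suc i) i \<le> \<rho>" for i
    unfolding \<rho>_def using g_pos g_noninc by (rule ratio_le_SUP_ratio)
  have \<beta>_le: "\<beta> \<le> measure (M i) {\<omega> \<in> space (M i). i + 1 \<le> X 1 \<omega>}" for i
    unfolding \<beta>_def by (rule cINF_lower) (auto intro: bdd_belowI2[of _ 0])
  have jump: "\<beta> \<le> (\<Sum>y. P i y * indicator {Suc i..} y)" for i
    using \<beta>_le[of i] measure_markov_chain_first_step_above[OF P chain] by simp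
  have "0 \<le> \<rho>"
    using ratio[of 0] divide_pos_pos[OF g_pos[of "Suc 0" "Suc 0"] g_pos[of "Suc 0" 0]] by linarith
  moreover have "\<beta> \<le> 1"
    by (rule order_trans[OF \<beta>_le[of 0] prob_space.prob_le_1]) (rule markov_chain_from_prob_space[OF chain])
  ultimately have "0 \<le> 1 - \<beta> * (1 - \<rho>)" "1 - \<beta> * (1 - \<rho>) < 1"
    using p1 p2 by (auto simp: \<rho>_def \<beta>_def intro: mult_le_one)
  moreover have "(\<integral>\<^sup>+ y. ennreal (P i y) * path_prob P N y {ys. i \<in> set (y # ys)} \<partial>count_space UNIV)
      \<le> ennreal (1 - \<beta> * (1 - \<rho>))" for i N
    using P g_pos g_noninc g_super ratio[of i] p1 jump[of i]
    by (intro return_prob_le) (auto simp: \<rho>_def)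
  ultimately show ?thesis by blast
qed

subsection \<open>Local time\<close>

lemma count_list_map_upt: "count_list (map f [0..<n]) a = card {j. j < n \<and> f j = a}"
proof (induction n)
  case (Suc n)
  have "{j. j < Suc n \<and> f j = a} = {j. j < n \<and> f j = a} \<union> (if f n = a then {n} else {})"
    by (auto simp: less_Suc_eq)
  then show ?case using Suc by (auto simp: card_insert_if)
qed simp

lemma local_time_ge_iff_prefix_count:
  "enat (Suc m) \<le> local_time X i \<omega> \<longleftrightarrow> (\<exists>N. Suc m \<le> count_list (map (\<lambda>j. X j \<omega>) [0..<Suc N]) i)"
proof
  define V where "V = {n. X n \<omega> = i}"
  assume "enat (Suc m) \<le> local_time X i \<omega>"
  then obtain F where F: "F \<subseteq> V" "finite F" "card F = Suc m"
  proof (cases "finite V")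
    case True
    then have "Suc m \<le> card V"
      using \<open>enat (Suc m) \<le> local_time X i \<omega>\<close> by (simp add: local_time_def V_def)
    then show ?thesis using that True by (meson obtain_subset_with_card_n rev_finite_subset)
  next
    case False
    then show ?thesis using that infinite_arbitrarily_large by blast
  qed
  then have "F \<noteq> {}" by auto
  have "F \<subseteq> {j. j < Suc (Max F) \<and> X j \<omega> = i}"
    using F \<open>F \<noteq> {}\<close> by (auto simp: V_def less_Suc_eq_le)
  then have "card F \<le> card {j. j < Suc (Max F) \<and> X j \<omega> = i}" by (intro card_mono) auto
  then show "\<exists>N. Suc m \<le> count_list (map (\<lambda>j. X j \<omega>) [0..<Suc N]) i"
    using F by (auto simp only: count_list_map_upt)
next
  assume "\<exists>N. Suc m \<le> count_list (map (\<lambda>j. X j \<omega>) [0..<Suc N]) i"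
  then obtain N where "Suc m \<le> card {j. j < Suc N \<and> X j \<omega> = i}"
    by (auto simp only: count_list_map_upt)
  moreover have "card {j. j < Suc N \<and> X j \<omega> = i} \<le> card {n. X n \<omega> = i}"
    if "finite {n. X n \<omega> = i}"
    using that by (intro card_mono) auto
  ultimately show "enat (Suc m) \<le> local_time X i \<omega>"
    by (auto simp: local_time_def)
qed

lemma local_time_ge_eq_UN_prefix_events:
  "{\<omega> \<in> space M. enat (Suc m) \<le> local_time X i \<omega>} =
    (\<Union>N. {\<omega> \<in> space M. map (\<lambda>j. X j \<omega>) [0..<Suc N] \<in> {zs. Suc m \<le> count_list zs i}})"
  by (auto simp: local_time_ge_iff_prefix_count)

lemma sets_local_time_ge:
  assumes "markov_chain_from P M X i"
  shows "{\<omega> \<in> space M. enat (Suc m) \<le> local_time X i \<omega>} \<in> sets M"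
  unfolding local_time_ge_eq_UN_prefix_events
  using sets_markov_chain_prefix_event[OF assms] by (intro sets.countable_nat_UN) blast

lemma emeasure_local_time_ge_le:
  assumes P: "stochastic_matrix P" and chain: "markov_chain_from P M X i"
    and return: "\<And>N. (\<integral>\<^sup>+ y. ennreal (P i y) * path_prob P N y {ys. i \<in> set (y # ys)}
      \<partial>count_space UNIV) \<le> ennreal q"
  shows "emeasure M {\<omega> \<in> space M. enat (Suc m) \<le> local_time X i \<omega>} \<le> ennreal q ^ m"
proof -
  define A where "A N = {\<omega> \<in> space M. map (\<lambda>j. X j \<omega>) [0..<Suc N] \<in> {zs. Suc m \<le> count_list zs i}}" for N
  have A_sets: "A N \<in> sets M" for N
    unfolding A_def by (rule sets_markov_chain_prefix_event[OF chain])
  have "incseq A"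
    by (rule incseq_SucI) (auto simp: A_def simp del: upt_Suc simp add: upt_Suc[of 0 "Suc _"])
  have "emeasure M (A N) \<le> ennreal q ^ m" for N
  proof -
    have "emeasure M (A N) = path_prob P N i {ys. Suc m \<le> count_list (i # ys) i}"
      unfolding A_def emeasure_markov_chain_prefix_event[OF chain] by simp
    also have "\<dots> \<le> path_prob P N i {ys. i \<in> set (i # ys)} * ennreal q ^ m"
      by (rule path_prob_visits_le[OF P return])
    also have "\<dots> = ennreal q ^ m"
      using path_prob_UNIV[OF P] by simp
    finally show ?thesis .
  qed
  moreover have "emeasure M (\<Union>N. A N) = (SUP N. emeasure M (A N))"
    using A_sets \<open>incseq A\<close> by (intro SUP_emeasure_incseq[symmetric]) auto
  ultimately show ?thesis
    unfolding local_time_ge_eq_UN_prefix_events A_def[symmetric] by (auto intro: SUP_least)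
qed

subsection \<open>Exponential moments\<close>

lemma exp_enat_le_one_plus_suminf:
  assumes "0 \<le> \<gamma>"
  shows "exp_enat \<gamma> l \<le> 1 + (\<Sum>m. ennreal (exp \<gamma> ^ Suc m) * of_bool (enat (Suc m) \<le> l))"
proof (cases l)
  case (enat n)
  show ?thesis
  proof (cases n)
    case 0
    then show ?thesis using enat by (simp add: exp_enat_def)
  next
    case (Suc m)
    have "exp (\<gamma> * real n) = exp \<gamma> ^ Suc m"
      using Suc by (simp only: mult.commute[of \<gamma>] exp_of_nat_mult)
    then have "exp_enat \<gamma> l = (\<Sum>k\<in>{m}. ennreal (exp \<gamma> ^ Suc k) * of_bool (enat (Suc k) \<le> l))"
      using enat Suc by (simp add: exp_enat_def)
    also have "\<dots> \<le> (\<Sum>k. ennreal (exp \<gamma> ^ Suc k) * of_bool (enat (Suc k) \<le> l))"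
      by (rule sum_le_suminf) (auto intro: summableI)
    finally show ?thesis by (rule order_trans) (rule add_increasing[OF zero_le order_refl])
  qed
next
  case infinity
  have "(\<Sum>m. ennreal (exp \<gamma> ^ Suc m)) = top"
  proof (rule summable_iff_suminf_neq_top)
    have "\<not> summable (\<lambda>m. exp \<gamma> ^ m)"
      using assms summable_geometric_iff[of "exp \<gamma>"] by simp
    then show "\<not> summable (\<lambda>m. exp \<gamma> ^ Suc m)"
      using summable_Suc_iff[of "\<lambda>m. exp \<gamma> ^ m"] by blast
  qed simp
  then show ?thesis using infinity by simp
qed

lemma nn_integral_exp_enat_le_geometric_tail:
  assumes "prob_space M" and "0 \<le> \<gamma>" "0 \<le> q" "exp \<gamma> * q < 1"
    and sets: "\<And>m. {\<omega> \<in> space M. enat (Suc m) \<le> L \<omega>} \<in> sets M"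
    and tail: "\<And>m. emeasure M {\<omega> \<in> space M. enat (Suc m) \<le> L \<omega>} \<le> ennreal q ^ m"
  shows "(\<integral>\<^sup>+ \<omega>. exp_enat \<gamma> (L \<omega>) \<partial>M) \<le> 1 + ennreal (exp \<gamma> / (1 - exp \<gamma> * q))"
proof -
  interpret prob_space M by fact
  define B where "B m = {\<omega> \<in> space M. enat (Suc m) \<le> L \<omega>}" for m
  have B_sets: "B m \<in> sets M" for m unfolding B_def by (rule sets)
  have "(\<integral>\<^sup>+ \<omega>. exp_enat \<gamma> (L \<omega>) \<partial>M)
      \<le> (\<integral>\<^sup>+ \<omega>. 1 + (\<Sum>m. ennreal (exp \<gamma> ^ Suc m) * indicator (B m) \<omega>) \<partial>M)"
    using exp_enat_le_one_plus_suminf[OF \<open>0 \<le> \<gamma>\<close>]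
    by (intro nn_integral_mono) (simp add: B_def indicator_def)
  also have "\<dots> = 1 + (\<Sum>m. ennreal (exp \<gamma> ^ Suc m) * emeasure M (B m))"
    using B_sets
    by (simp add: nn_integral_add nn_integral_suminf emeasure_space_1 nn_integral_cmult_indicator)
  also have "\<dots> \<le> 1 + (\<Sum>m. ennreal (exp \<gamma> * (exp \<gamma> * q) ^ m))"
  proof (intro add_left_mono suminf_le)
    fix m
    have "ennreal (exp \<gamma> ^ Suc m) * emeasure M (B m) \<le> ennreal (exp \<gamma> ^ Suc m) * ennreal q ^ m"
      using tail unfolding B_def by (intro mult_left_mono) auto
    also have "\<dots> = ennreal (exp \<gamma> * (exp \<gamma> * q) ^ m)"
      using \<open>0 \<le> q\<close> by (simp add: ennreal_power[symmetric] ennreal_mult'' power_mult_distrib mult_ac)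
    finally show "ennreal (exp \<gamma> ^ Suc m) * emeasure M (B m) \<le> ennreal (exp \<gamma> * (exp \<gamma> * q) ^ m)" .
  qed auto
  also have "(\<Sum>m. ennreal (exp \<gamma> * (exp \<gamma> * q) ^ m)) = ennreal (exp \<gamma> / (1 - exp \<gamma> * q))"
  proof -
    have "(\<lambda>m. exp \<gamma> * (exp \<gamma> * q) ^ m) sums (exp \<gamma> * (1 / (1 - exp \<gamma> * q)))"
      using \<open>0 \<le> q\<close> \<open>exp \<gamma> * q < 1\<close> by (intro sums_mult geometric_sums) simp
    then show ?thesis
      using \<open>0 \<le> q\<close> by (subst suminf_ennreal2) (auto simp: sums_iff)
  qed
  finally show ?thesis .
qed

theorem proposition5:
  fixes P :: "nat \<Rightarrow> nat \<Rightarrow> real"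
    and M :: "nat \<Rightarrow> 'a measure"
    and X :: "nat \<Rightarrow> 'a \<Rightarrow> nat"
    and g :: "nat \<Rightarrow> nat \<Rightarrow> real"
  assumes P: "stochastic_matrix P"
    and chain: "\<And>i. markov_chain_from P (M i) X i"
    and g_pos: "\<And>i k. 0 < g i k"
    and g_noninc: "\<And>i j k. j \<le> k \<Longrightarrow> g i k \<le> g i j"
    and g_super: "\<And>i j. (\<Sum>k. P j k * g i k) \<le> g i j"
    and p1: "(SUP i\<in>{1..}. g i i / g i (i - 1)) < 1"
    and p2: "(INF i. measure (M i) {\<omega> \<in> space (M i). X 1 \<omega> \<ge> i + 1}) > 0"
  shows "\<exists>\<gamma>>0. (SUP i. \<integral>\<^sup>+ \<omega>. exp_enat \<gamma> (local_time X i \<omega>) \<partial>M i) < \<infinity>"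
proof -
  obtain q where q: "0 \<le> q" "q < 1" and return:
    "\<And>i N. (\<integral>\<^sup>+ y. ennreal (P i y) * path_prob P N y {ys. i \<in> set (y # ys)} \<partial>count_space UNIV)
      \<le> ennreal q"
    using return_prob_uniform_bound[OF P chain g_pos g_noninc g_super p1 p2] by blast
  define \<gamma> where "\<gamma> = ln (2 / (1 + q))"
  have "0 < \<gamma>" "exp \<gamma> * q < 1" using q by (auto simp: \<gamma>_def field_simps)
  then have "(\<integral>\<^sup>+ \<omega>. exp_enat \<gamma> (local_time X i \<omega>) \<partial>M i) \<le> 1 + ennreal (exp \<gamma> / (1 - exp \<gamma> * q))" for i
    using markov_chain_from_prob_space[OF chain] q
      sets_local_time_ge[OF chain] emeasure_local_time_ge_le[OF P chain return]
    by (intro nn_integral_exp_enat_le_geometric_tail) auto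
  then have "(SUP i. \<integral>\<^sup>+ \<omega>. exp_enat \<gamma> (local_time X i \<omega>) \<partial>M i) \<le> 1 + ennreal (exp \<gamma> / (1 - exp \<gamma> * q))"
    by (rule SUP_least)
  also have "\<dots> < \<infinity>" by simp
  finally show ?thesis using \<open>0 < \<gamma>\<close> by blast
qed

end
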